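(* Let $c\in C^2(\mathbb R)$ and suppose there exist constants $\kappa>1$, $\lambda\ge 0$, $\bar\lambda\ge 0$ with $\frac1\kappa\le c(x)\le\kappa$, $|c'(x)|\le\lambda$ and $|c''(x)|\le\bar\lambda$ for all $x\in\mathbb R$. Let $(u_0,R_0,S_0,\mu_0,\nu_0)\in\mathcal D$ and let $(u(t),R(t),S(t),\mu(t),\nu(t))$ be the global conservative solution of the nonlinear variational wave equation $u_{tt}-c(u)(c(u)u_x)_x=0$ with this initial data. Then $u$ is globally H\"older continuous: there exists a constant $D$, depending only on $\kappa$ and $(\mu_0+\nu_0)(\mathbb R)$, such that \[ |u(t_1,x_1)-u(t_2,x_2)|\le D\sqrt{|t_2-t_1|+|x_2-x_1|}\quad\text{for all }(t_1,x_1),(t_2,x_2)\in\mathbb R^2. \]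
   Context: The set $\mathcal D$ of admissible (Eulerian) data consists of all tuples $(u,R,S,\mu,\nu)$ with $(u,R,S)\in[L^2(\mathbb R)]^3$, where $R$ and $S$ play the role of $u_t+c(u)u_x$ and $u_t-c(u)u_x$ (so $2c(u)u_x=R-S$), and $\mu,\nu$ are positive finite Radon measures whose absolutely continuous parts satisfy $d\mu_{ac}=\frac14R^2\,dx$, $d\nu_{ac}=\frac14S^2\,dx$. The global conservative solution is the (unique) weak solution constructed by the generalized method of characteristics (change to Lagrangian coordinates $(\xi,\eta)$ in which backward characteristics $y_t=-c(u(t,y))$ and forward characteristics $z_t=c(u(t,z))$ become vertical and horizontal lines); it satisfies in particular $(\mu+\nu)_t-(c(u)(\mu-\nu))_x=0$, $\big(\frac{\mu-\nu}{c(u)}\big)_t-(\mu+\nu)_x=0$ in the sense of distributions, and conservation of total energy $(\mu+\nu)(t,\mathbb R)=(\mu_0+\nu_0)(\mathbb R)$ for all $t$. *)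

theory Defs
  imports "HOL-Analysis.Analysis"
begin

definition L2 :: "(real \<Rightarrow> real) \<Rightarrow> bool" where
  "L2 f \<longleftrightarrow> f \<in> borel_measurable borel \<and> integrable lborel (\<lambda>x. (f x)^2)"

definition fin_borel_measure :: "real measure \<Rightarrow> bool" where
  "fin_borel_measure \<mu> \<longleftrightarrow> sets \<mu> = sets borel \<and> emeasure \<mu> UNIV < \<infinity>"

text \<open>The absolutely continuous part (Lebesgue decomposition w.r.t. Lebesgue measure)
  of mu has density g: mu = g dx + mu_s with mu_s concentrated on a Lebesgue null set N.\<close>
definition ac_part_density :: "real measure \<Rightarrow> (real \<Rightarrow> real) \<Rightarrow> bool" where
  "ac_part_density \<mu> g \<longleftrightarrow>
     (\<exists>N\<in>sets borel. emeasure lborel N = 0 \<and>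
        (\<forall>A\<in>sets borel. emeasure \<mu> (A - N) = (\<integral>\<^sup>+x\<in>A. ennreal (g x) \<partial>lborel)))"

text \<open>The admissible set D (depending on the wave speed c through 2 c(u) u_x = R - S).\<close>
definition admissible ::
  "(real \<Rightarrow> real) \<Rightarrow> (real \<Rightarrow> real) \<Rightarrow> (real \<Rightarrow> real) \<Rightarrow> (real \<Rightarrow> real)
    \<Rightarrow> real measure \<Rightarrow> real measure \<Rightarrow> bool" where
  "admissible c u R S \<mu> \<nu> \<longleftrightarrow>
     L2 u \<and> L2 R \<and> L2 S \<and>
     (\<forall>a b. a \<le> b \<longrightarrow>
        ((\<lambda>y. (R y - S y) / (2 * c (u y))) has_integral (u b - u a)) {a..b}) \<and>
     fin_borel_measure \<mu> \<and> fin_borel_measure \<nu> \<and>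
     ac_part_density \<mu> (\<lambda>x. (R x)^2 / 4) \<and> ac_part_density \<nu> (\<lambda>x. (S x)^2 / 4)"

definition test_fun ::
  "(real \<Rightarrow> real \<Rightarrow> real) \<Rightarrow> (real \<Rightarrow> real \<Rightarrow> real) \<Rightarrow> (real \<Rightarrow> real \<Rightarrow> real) \<Rightarrow> bool" where
  "test_fun \<phi> \<phi>t \<phi>x \<longleftrightarrow>
     continuous_on UNIV (\<lambda>(t, x). \<phi>t t x) \<and> continuous_on UNIV (\<lambda>(t, x). \<phi>x t x) \<and>
     (\<forall>t x. ((\<lambda>s. \<phi> s x) has_real_derivative \<phi>t t x) (at t) \<and>
            ((\<lambda>y. \<phi> t y) has_real_derivative \<phi>x t x) (at x)) \<and>
     (\<exists>K. \<forall>t x. K < \<bar>t\<bar> \<or> K < \<bar>x\<bar> \<longrightarrow> \<phi> t x = 0)"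

definition dint :: "(real \<Rightarrow> real \<Rightarrow> real) \<Rightarrow> real" where
  "dint f = (\<integral>t. (\<integral>x. f t x \<partial>lborel) \<partial>lborel)"

text \<open>Global conservative solution (for all t in R) of u_tt - c(u)(c(u)u_x)_x = 0 with
  initial data (u0,R0,S0,mu0,nu0), characterised by its weak formulation:
  the data stay in D, u_t = (R+S)/2 and the wave equation hold in distributions,
  the two balance laws for the energy measures hold in distributions, and the total
  energy is conserved.\<close>
definition conservative_solution ::
  "(real \<Rightarrow> real) \<Rightarrow> (real \<Rightarrow> real) \<Rightarrow>
   (real \<Rightarrow> real \<Rightarrow> real) \<Rightarrow> (real \<Rightarrow> real \<Rightarrow> real) \<Rightarrow> (real \<Rightarrow> real \<Rightarrow> real) \<Rightarrow>
   (real \<Rightarrow> real measure) \<Rightarrow> (real \<Rightarrow> real measure) \<Rightarrow>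
   (real \<Rightarrow> real) \<Rightarrow> (real \<Rightarrow> real) \<Rightarrow> (real \<Rightarrow> real) \<Rightarrow> real measure \<Rightarrow> real measure \<Rightarrow> bool" where
  "conservative_solution c c' u R S \<mu> \<nu> u0 R0 S0 \<mu>0 \<nu>0 \<longleftrightarrow>
     (\<forall>t. admissible c (u t) (R t) (S t) (\<mu> t) (\<nu> t)) \<and>
     u 0 = u0 \<and> R 0 = R0 \<and> S 0 = S0 \<and> \<mu> 0 = \<mu>0 \<and> \<nu> 0 = \<nu>0 \<and>
     continuous_on UNIV (\<lambda>(t, x). u t x) \<and>
     (\<lambda>(t, x). R t x) \<in> borel_measurable borel \<and>
     (\<lambda>(t, x). S t x) \<in> borel_measurable borel \<and>
     (\<forall>\<phi> \<phi>t \<phi>x. test_fun \<phi> \<phi>t \<phi>x \<longrightarrow>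
        dint (\<lambda>t x. u t x * \<phi>t t x + (R t x + S t x) / 2 * \<phi> t x) = 0 \<and>
        dint (\<lambda>t x. (R t x + S t x) / 2 * \<phi>t t x
                   - (R t x - S t x) / 2 *
                     (c' (u t x) * (R t x - S t x) / (2 * c (u t x)) * \<phi> t x
                      + c (u t x) * \<phi>x t x)) = 0 \<and>
        (\<integral>t. (\<integral>x. \<phi>t t x \<partial>\<mu> t) + (\<integral>x. \<phi>t t x \<partial>\<nu> t)
               - (\<integral>x. c (u t x) * \<phi>x t x \<partial>\<mu> t) + (\<integral>x. c (u t x) * \<phi>x t x \<partial>\<nu> t)
             \<partial>lborel) = 0 \<and>
        (\<integral>t. (\<integral>x. \<phi>t t x / c (u t x) \<partial>\<mu> t) - (\<integral>x. \<phi>t t x / c (u t x) \<partial>\<nu> t)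
               - (\<integral>x. \<phi>x t x \<partial>\<mu> t) - (\<integral>x. \<phi>x t x \<partial>\<nu> t)
             \<partial>lborel) = 0) \<and>
     (\<forall>t. measure (\<mu> t) UNIV + measure (\<nu> t) UNIV = measure \<mu>0 UNIV + measure \<nu>0 UNIV)"

end

theory Submission
  imports Defs
begin

text \<open>
  Since \<open>2 c(u) u\<^sub>x = R - S\<close> and \<open>\<integral>R\<^sup>2 + S\<^sup>2 \<le> 4 E\<close> for the conserved energy \<open>E\<close>,
  Cauchy-Schwarz gives \<open>|u(t,y) - u(t,z)| \<le> C sqrt |y - z|\<close>.
  For two times \<open>a < b\<close> put \<open>h = b - a\<close> and average \<open>u(t,\<cdot>)\<close> against a \<open>C\<^sup>1\<close> plateau
  function \<open>\<beta>\<close> of width \<open>h\<close> around \<open>x\<close>.  By the weak equation \<open>u\<^sub>t = (R + S)/2\<close> the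
  average is Lipschitz in \<open>t\<close> with constant \<open>\<parallel>(R + S)/2\<parallel>\<^sub>2 \<parallel>\<beta>\<parallel>\<^sub>2 = O(sqrt h)\<close>, while by
  the spatial estimate it differs from \<open>u(t,x) \<integral>\<beta>\<close> by \<open>O(sqrt h) \<integral>\<beta>\<close>; as \<open>\<integral>\<beta> \<ge> h\<close>,
  this yields \<open>|u(b,x) - u(a,x)| = O(sqrt h)\<close>.
\<close>

lemma two_abs_mult_le:
  fixes x y e :: real
  assumes "e > 0"
  shows "2 * \<bar>x * y\<bar> \<le> e * x\<^sup>2 + y\<^sup>2 / e"
proof -
  have "0 \<le> (e * \<bar>x\<bar> - \<bar>y\<bar>)\<^sup>2" by simp
  then have "(2 * \<bar>x * y\<bar>) * e \<le> (e * x\<^sup>2 + y\<^sup>2 / e) * e"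
    using assms by (simp add: power2_eq_square algebra_simps abs_mult)
  then show ?thesis using assms by simp
qed

lemma square_integrable_product:
  fixes f g :: "real \<Rightarrow> real"
  assumes "f \<in> borel_measurable borel" "g \<in> borel_measurable borel"
    and f2: "integrable lborel (\<lambda>y. (f y)\<^sup>2)" and g2: "integrable lborel (\<lambda>y. (g y)\<^sup>2)"
    and "e > 0"
  shows "integrable lborel (\<lambda>y. f y * g y)"
    and "2 * \<bar>\<integral>y. f y * g y \<partial>lborel\<bar> \<le> e * (\<integral>y. (f y)\<^sup>2 \<partial>lborel) + (\<integral>y. (g y)\<^sup>2 \<partial>lborel) / e"
proof -
  let ?bound = "\<lambda>y. (e * (f y)\<^sup>2 + (g y)\<^sup>2 / e) / 2"
  have pointwise: "\<bar>f y * g y\<bar> \<le> ?bound y" for y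
    using two_abs_mult_le[OF \<open>e > 0\<close>, of "f y" "g y"] by simp
  have bound_int: "integrable lborel ?bound" using f2 g2 by simp
  show prod_int: "integrable lborel (\<lambda>y. f y * g y)"
  proof (rule Bochner_Integration.integrable_bound[OF bound_int])
    show "(\<lambda>y. f y * g y) \<in> borel_measurable lborel" using assms(1,2) by simp
    show "AE y in lborel. norm (f y * g y) \<le> norm (?bound y)"
      using order_trans[OF pointwise abs_ge_self] by (simp del: abs_mult)
  qed
  have "\<bar>\<integral>y. f y * g y \<partial>lborel\<bar> \<le> (\<integral>y. ?bound y \<partial>lborel)"
    by (rule integral_abs_bound_integral[OF prod_int bound_int pointwise])
  also have "\<dots> = (e * (\<integral>y. (f y)\<^sup>2 \<partial>lborel) + (\<integral>y. (g y)\<^sup>2 \<partial>lborel) / e) / 2"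
    using f2 g2 by simp
  finally show "2 * \<bar>\<integral>y. f y * g y \<partial>lborel\<bar> \<le> e * (\<integral>y. (f y)\<^sup>2 \<partial>lborel) + (\<integral>y. (g y)\<^sup>2 \<partial>lborel) / e"
    by simp
qed

lemma
  fixes f :: "real \<Rightarrow> real"
  assumes "integrable lborel f" "\<And>x. f x \<ge> 0"
  shows integrable_on_Icc_of_nonneg: "f integrable_on {a..b}"
    and integral_Icc_le_lborel_integral: "integral {a..b} f \<le> (\<integral>x. f x \<partial>lborel)"
proof -
  have set_int: "set_integrable lborel {a..b} f"
    unfolding set_integrable_def using assms(1) by (intro integrable_mult_indicator) auto
  show "f integrable_on {a..b}"
    using set_borel_integral_eq_integral(1)[OF set_int] .
  have "integral {a..b} f = (LINT x : {a..b} | lborel. f x)"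
    using set_borel_integral_eq_integral(2)[OF set_int] by simp
  also have "\<dots> \<le> (\<integral>x. f x \<partial>lborel)"
    using set_int assms unfolding set_lebesgue_integral_def set_integrable_def
    by (intro integral_mono) (auto split: split_indicator)
  finally show "integral {a..b} f \<le> (\<integral>x. f x \<partial>lborel)" .
qed

lemma
  fixes f :: "real \<Rightarrow> real"
  assumes cont: "continuous_on {p..q} f" and vanish: "\<And>s. s \<notin> {p..q} \<Longrightarrow> f s = 0"
  shows integrable_continuous_vanishing_outside: "integrable lborel f"
    and lborel_integral_eq_Icc_integral: "(\<integral>s. f s \<partial>lborel) = integral {p..q} f"
proof -
  have f_eq: "(\<lambda>x. indicator {p..q} x *\<^sub>R f x) = f"
    using vanish by (intro ext) (auto simp: indicator_def)
  have "integrable lborel (\<lambda>x. indicator {p..q} x *\<^sub>R f x)"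
    by (rule borel_integrable_compact[OF compact_Icc cont])
  then show f_int: "integrable lborel f" unfolding f_eq .
  have "set_integrable lborel {p..q} f"
    unfolding set_integrable_def f_eq by (rule f_int)
  from set_borel_integral_eq_integral(2)[OF this]
  show "(\<integral>s. f s \<partial>lborel) = integral {p..q} f"
    unfolding set_lebesgue_integral_def f_eq by simp
qed

lemma integral_weight_approx:
  fixes f g :: "real \<Rightarrow> real"
  assumes g_int: "integrable lborel g" and gf_int: "integrable lborel (\<lambda>s. g s * f s)"
    and g_nonneg: "\<And>s. g s \<ge> 0" and close: "\<And>s. g s \<noteq> 0 \<Longrightarrow> \<bar>f s - z\<bar> \<le> \<epsilon>"
  shows "\<bar>(\<integral>s. g s * f s \<partial>lborel) - z * (\<integral>s. g s \<partial>lborel)\<bar> \<le> \<epsilon> * (\<integral>s. g s \<partial>lborel)"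
proof -
  have "(\<integral>s. g s * f s \<partial>lborel) - z * (\<integral>s. g s \<partial>lborel) = (\<integral>s. g s * (f s - z) \<partial>lborel)"
    using g_int gf_int by (simp add: algebra_simps)
  also have "\<bar>\<dots>\<bar> \<le> (\<integral>s. \<epsilon> * g s \<partial>lborel)"
  proof (rule integral_abs_bound_integral)
    show "integrable lborel (\<lambda>s. g s * (f s - z))"
      using g_int gf_int by (simp add: algebra_simps)
    show "\<bar>g s * (f s - z)\<bar> \<le> \<epsilon> * g s" for s
      using close[of s] g_nonneg[of s] by (cases "g s = 0") (auto simp: abs_mult mult.commute mult_left_mono)
  qed (use g_int in simp)
  finally show ?thesis using g_int by simp
qed

section \<open>Energy bounds and Holder continuity in space\<close>

lemma ac_part_density_integral_le:
  assumes "fin_borel_measure \<mu>" and "ac_part_density \<mu> g"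
    and g_int: "integrable lborel g" and g_nonneg: "\<And>x. g x \<ge> 0"
  shows "(\<integral>x. g x \<partial>lborel) \<le> measure \<mu> UNIV"
proof -
  obtain N where N: "emeasure \<mu> (UNIV - N) = (\<integral>\<^sup>+x. ennreal (g x) \<partial>lborel)"
    using \<open>ac_part_density \<mu> g\<close> unfolding ac_part_density_def by force
  have "ennreal (\<integral>x. g x \<partial>lborel) = emeasure \<mu> (UNIV - N)"
    unfolding N using g_int g_nonneg by (intro nn_integral_eq_integral[symmetric]) auto
  also have "\<dots> \<le> emeasure \<mu> UNIV"
    using \<open>fin_borel_measure \<mu>\<close> unfolding fin_borel_measure_def by (intro emeasure_mono) auto
  also have "\<dots> = ennreal (measure \<mu> UNIV)"
    using \<open>fin_borel_measure \<mu>\<close> unfolding fin_borel_measure_def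
    by (simp add: emeasure_eq_ennreal_measure less_top[symmetric])
  finally show ?thesis using measure_nonneg[of \<mu> UNIV] by (auto simp: ennreal_le_iff2)
qed

lemma admissible_square_integrals_le:
  assumes "admissible c u R S \<mu> \<nu>"
  shows "(\<integral>x. (R x)\<^sup>2 \<partial>lborel) + (\<integral>x. (S x)\<^sup>2 \<partial>lborel) \<le> 4 * (measure \<mu> UNIV + measure \<nu> UNIV)"
proof -
  have "(\<integral>x. (R x)\<^sup>2 / 4 \<partial>lborel) \<le> measure \<mu> UNIV"
    using assms unfolding admissible_def L2_def by (intro ac_part_density_integral_le) auto
  moreover have "(\<integral>x. (S x)\<^sup>2 / 4 \<partial>lborel) \<le> measure \<nu> UNIV"
    using assms unfolding admissible_def L2_def by (intro ac_part_density_integral_le) auto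
  ultimately show ?thesis by simp
qed

lemma admissible_half_sum_square:
  assumes "admissible c u R S \<mu> \<nu>"
  shows "integrable lborel (\<lambda>x. ((R x + S x) / 2)\<^sup>2)"
    and "(\<integral>x. ((R x + S x) / 2)\<^sup>2 \<partial>lborel) \<le> 2 * (measure \<mu> UNIV + measure \<nu> UNIV)"
proof -
  have R: "R \<in> borel_measurable borel" "integrable lborel (\<lambda>x. (R x)\<^sup>2)"
    and S: "S \<in> borel_measurable borel" "integrable lborel (\<lambda>x. (S x)\<^sup>2)"
    using assms unfolding admissible_def L2_def by auto
  have pointwise: "((R x + S x) / 2)\<^sup>2 \<le> ((R x)\<^sup>2 + (S x)\<^sup>2) / 2" for x
    using zero_le_power2[of "R x - S x"] by (simp add: power2_eq_square field_simps)
  have bound_int: "integrable lborel (\<lambda>x. ((R x)\<^sup>2 + (S x)\<^sup>2) / 2)" using R S by simp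
  show sq_int: "integrable lborel (\<lambda>x. ((R x + S x) / 2)\<^sup>2)"
  proof (rule Bochner_Integration.integrable_bound[OF bound_int])
    show "(\<lambda>x. ((R x + S x) / 2)\<^sup>2) \<in> borel_measurable lborel" using R S by simp
    show "AE x in lborel. norm (((R x + S x) / 2)\<^sup>2) \<le> norm (((R x)\<^sup>2 + (S x)\<^sup>2) / 2)"
      using pointwise by simp
  qed
  have "(\<integral>x. ((R x + S x) / 2)\<^sup>2 \<partial>lborel) \<le> (\<integral>x. ((R x)\<^sup>2 + (S x)\<^sup>2) / 2 \<partial>lborel)"
    by (rule integral_mono[OF sq_int bound_int pointwise])
  also have "\<dots> \<le> 2 * (measure \<mu> UNIV + measure \<nu> UNIV)"
    using admissible_square_integrals_le[OF assms] R S by simp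
  finally show "(\<integral>x. ((R x + S x) / 2)\<^sup>2 \<partial>lborel) \<le> 2 * (measure \<mu> UNIV + measure \<nu> UNIV)" .
qed

lemma abs_diff_div_speed_le:
  fixes r s c e \<kappa> :: real
  assumes "1 / \<kappa> \<le> c" "\<kappa> > 0" "e > 0"
  shows "\<bar>(r - s) / (2 * c)\<bar> \<le> \<kappa> / 4 * (2 * e * (r\<^sup>2 + s\<^sup>2) + 1 / e)"
proof -
  have "0 < 1 / \<kappa>" using \<open>\<kappa> > 0\<close> by simp
  then have "c > 0" using \<open>1 / \<kappa> \<le> c\<close> by (rule less_le_trans)
  then have "1 / c \<le> \<kappa>" using assms by (simp add: field_simps)
  have "(r - s)\<^sup>2 \<le> 2 * (r\<^sup>2 + s\<^sup>2)"
    using zero_le_power2[of "r + s"] by (simp add: power2_eq_square algebra_simps)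
  then have "e * (r - s)\<^sup>2 \<le> 2 * e * (r\<^sup>2 + s\<^sup>2)"
    using \<open>e > 0\<close> by simp
  then have rs: "2 * \<bar>r - s\<bar> \<le> 2 * e * (r\<^sup>2 + s\<^sup>2) + 1 / e"
    using two_abs_mult_le[OF \<open>e > 0\<close>, of "r - s" 1] by simp
  have "\<bar>(r - s) / (2 * c)\<bar> = \<bar>r - s\<bar> * (1 / c) / 2"
    using \<open>c > 0\<close> by (simp add: abs_mult)
  also have "\<dots> \<le> \<bar>r - s\<bar> * \<kappa> / 2"
    using \<open>1 / c \<le> \<kappa>\<close> by (intro divide_right_mono mult_left_mono) auto
  also have "\<dots> = \<kappa> / 4 * (2 * \<bar>r - s\<bar>)" by simp
  also have "\<dots> \<le> \<kappa> / 4 * (2 * e * (r\<^sup>2 + s\<^sup>2) + 1 / e)"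
    using rs \<open>\<kappa> > 0\<close> by (intro mult_left_mono) auto
  finally show ?thesis .
qed

lemma admissible_holder_ordered:
  assumes adm: "admissible c u R S \<mu> \<nu>" and c_lower: "\<And>x. 1 / \<kappa> \<le> c x" and "\<kappa> > 0"
    and "a \<le> b"
  shows "\<bar>u b - u a\<bar> \<le> \<kappa> * (8 * (measure \<mu> UNIV + measure \<nu> UNIV) + 1) / 4 * sqrt (b - a)"
proof (cases "a = b")
  case False
  define E where "E = measure \<mu> UNIV + measure \<nu> UNIV"
  \<comment> \<open>AM-GM with this weight does the job of Cauchy-Schwarz on \<open>{a..b}\<close>\<close>
  define e where "e = sqrt (b - a)"
  have "e > 0" using \<open>a \<le> b\<close> False by (simp add: e_def)
  have R2: "integrable lborel (\<lambda>x. (R x)\<^sup>2)" and S2: "integrable lborel (\<lambda>x. (S x)\<^sup>2)"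
    using adm unfolding admissible_def L2_def by auto
  define IR where "IR = integral {a..b} (\<lambda>x. (R x)\<^sup>2)"
  define IS where "IS = integral {a..b} (\<lambda>x. (S x)\<^sup>2)"
  have "IR + IS \<le> 4 * E"
    using integral_Icc_le_lborel_integral[OF R2, of a b] integral_Icc_le_lborel_integral[OF S2, of a b]
      admissible_square_integrals_le[OF adm] by (simp add: IR_def IS_def E_def)
  define g where "g y = \<kappa> / 4 * (2 * e * ((R y)\<^sup>2 + (S y)\<^sup>2) + 1 / e)" for y
  have g_int: "(g has_integral \<kappa> / 4 * (2 * e * (IR + IS) + (b - a) / e)) {a..b}"
    unfolding g_def IR_def IS_def using \<open>a \<le> b\<close>
    by (intro has_integral_mult_right has_integral_add has_integral_const_real[THEN has_integral_eq_rhs]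
        integrable_integral integrable_on_Icc_of_nonneg R2 S2) auto
  have bound: "norm ((R y - S y) / (2 * c (u y))) \<le> g y" for y
    unfolding g_def using abs_diff_div_speed_le[OF c_lower \<open>\<kappa> > 0\<close> \<open>e > 0\<close>] by simp
  have u_int: "((\<lambda>y. (R y - S y) / (2 * c (u y))) has_integral (u b - u a)) {a..b}"
    using adm \<open>a \<le> b\<close> unfolding admissible_def by blast
  have "\<bar>u b - u a\<bar> \<le> \<kappa> / 4 * (2 * e * (IR + IS) + (b - a) / e)"
    using integral_norm_bound_integral[OF has_integral_integrable[OF u_int] has_integral_integrable[OF g_int] bound]
    by (simp add: integral_unique[OF u_int] integral_unique[OF g_int])
  also have "\<dots> \<le> \<kappa> / 4 * (2 * e * (4 * E) + e)"
    using \<open>IR + IS \<le> 4 * E\<close> \<open>\<kappa> > 0\<close> \<open>e > 0\<close> \<open>a \<le> b\<close>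
    by (intro mult_left_mono add_mono) (auto simp: e_def real_div_sqrt)
  finally show ?thesis by (simp add: E_def e_def algebra_simps)
qed simp

lemma admissible_holder:
  assumes "admissible c u R S \<mu> \<nu>" and "\<And>x. 1 / \<kappa> \<le> c x" and "\<kappa> > 0"
  shows "\<bar>u y - u z\<bar> \<le> \<kappa> * (8 * (measure \<mu> UNIV + measure \<nu> UNIV) + 1) / 4 * sqrt \<bar>y - z\<bar>"
  using admissible_holder_ordered[OF assms, of y z] admissible_holder_ordered[OF assms, of z y]
  by (cases "z \<le> y") (auto simp: abs_minus_commute)

section \<open>A \<open>C\<^sup>1\<close> step function, tent kernels and windows\<close>

definition ramp_sq :: "real \<Rightarrow> real" where
  "ramp_sq r = (max 0 r)\<^sup>2"

lemma has_real_derivative_ramp_sq: "(ramp_sq has_real_derivative 2 * max 0 r) (at r)"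
proof (cases r "0::real" rule: linorder_cases)
  case less
  have "((\<lambda>_. 0) has_real_derivative 2 * max 0 r) (at r)" using less by simp
  then show ?thesis
    by (rule has_field_derivative_transform_within_open[where S = "{..<0}"])
       (use less in \<open>auto simp: ramp_sq_def\<close>)
next
  case equal
  have "((\<lambda>y. max 0 y) \<longlongrightarrow> max 0 0) (at (0::real))"
    by (intro tendsto_intros)
  moreover have "\<forall>\<^sub>F y in at 0. max 0 y = (ramp_sq y - ramp_sq 0) / (y - 0)"
    unfolding eventually_at_filter by (auto simp: ramp_sq_def power2_eq_square max_def)
  ultimately have "((\<lambda>y. (ramp_sq y - ramp_sq 0) / (y - 0)) \<longlongrightarrow> 0) (at 0)"
    by (simp add: tendsto_cong)
  then show ?thesis using equal by (simp add: has_field_derivative_iff)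
next
  case greater
  have "((\<lambda>y. y\<^sup>2) has_real_derivative 2 * max 0 r) (at r)"
    using greater by (auto intro!: derivative_eq_intros)
  then show ?thesis
    by (rule has_field_derivative_transform_within_open[where S = "{0<..}"])
       (use greater in \<open>auto simp: ramp_sq_def\<close>)
qed

definition smooth_step :: "real \<Rightarrow> real" where
  "smooth_step r = (ramp_sq r - 2 * ramp_sq (r - 1) + ramp_sq (r - 2)) / 2"

definition tent :: "real \<Rightarrow> real" where
  "tent r = max 0 r - 2 * max 0 (r - 1) + max 0 (r - 2)"

lemma has_real_derivative_smooth_step: "(smooth_step has_real_derivative tent r) (at r)"
proof -
  have "((\<lambda>r. (ramp_sq r - 2 * ramp_sq (r - 1) + ramp_sq (r - 2)) / 2) has_real_derivative
      (2 * max 0 r - 2 * (2 * max 0 (r - 1) * 1) + 2 * max 0 (r - 2) * 1) / 2) (at r)"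
    by (intro DERIV_cdivide DERIV_add DERIV_diff DERIV_cmult has_real_derivative_ramp_sq
        DERIV_chain2[OF has_real_derivative_ramp_sq]) (auto intro!: derivative_eq_intros)
  then show ?thesis
    unfolding smooth_step_def[abs_def] by (rule DERIV_cong) (simp add: tent_def)
qed

lemma continuous_on_tent [continuous_intros]:
  "continuous_on A f \<Longrightarrow> continuous_on A (\<lambda>x. tent (f x))"
  unfolding tent_def by (intro continuous_intros)

lemma continuous_on_smooth_step [continuous_intros]:
  assumes "continuous_on A f"
  shows "continuous_on A (\<lambda>x. smooth_step (f x))"
proof -
  have "continuous_on UNIV smooth_step"
    by (intro continuous_at_imp_continuous_on ballI DERIV_isCont[OF has_real_derivative_smooth_step])
  then show ?thesis by (rule continuous_on_compose2[OF _ assms]) auto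
qed

lemma tent_nonneg: "tent r \<ge> 0"
  unfolding tent_def by (auto simp: max_def)

lemma tent_eq_0: "r \<le> 0 \<or> 2 \<le> r \<Longrightarrow> tent r = 0"
  unfolding tent_def by (auto simp: max_def)

lemma mono_smooth_step: "mono smooth_step"
proof (rule monoI)
  fix r s :: real
  assume "r \<le> s"
  then show "smooth_step r \<le> smooth_step s"
    using has_real_derivative_smooth_step tent_nonneg by (blast intro: DERIV_nonneg_imp_nondecreasing)
qed

lemma smooth_step_eq_0: "r \<le> 0 \<Longrightarrow> smooth_step r = 0"
  unfolding smooth_step_def ramp_sq_def by (simp add: max_def)

lemma smooth_step_eq_1: "2 \<le> r \<Longrightarrow> smooth_step r = 1"
  unfolding smooth_step_def ramp_sq_def by (simp add: max_def power2_eq_square algebra_simps)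

lemma smooth_step_nonneg: "0 \<le> smooth_step r"
  using monoD[OF mono_smooth_step, of 0 r] smooth_step_eq_0[of 0] smooth_step_eq_0[of r]
  by (cases "r \<le> 0") auto

lemma smooth_step_le_1: "smooth_step r \<le> 1"
  using monoD[OF mono_smooth_step, of r 2] smooth_step_eq_1[of 2] smooth_step_eq_1[of r]
  by (cases "r \<le> 2") auto

lemma smooth_step_1: "smooth_step 1 = 1 / 2"
  unfolding smooth_step_def ramp_sq_def by simp

definition tent_kernel :: "real \<Rightarrow> real \<Rightarrow> real \<Rightarrow> real" where
  "tent_kernel a \<delta> s = tent ((s - a) / \<delta>) / \<delta>"

lemma continuous_on_tent_kernel [continuous_intros]: "continuous_on A (tent_kernel a \<delta>)"
  unfolding tent_kernel_def[abs_def] divide_inverse by (intro continuous_intros)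

lemma tent_kernel_nonneg: "\<delta> \<ge> 0 \<Longrightarrow> tent_kernel a \<delta> s \<ge> 0"
  unfolding tent_kernel_def using tent_nonneg by simp

lemma tent_kernel_eq_0:
  assumes "\<delta> > 0" "s \<notin> {a..a + 2 * \<delta>}"
  shows "tent_kernel a \<delta> s = 0"
proof -
  have "(s - a) / \<delta> \<le> 0 \<or> 2 \<le> (s - a) / \<delta>" using assms by (auto simp: field_simps)
  then show ?thesis unfolding tent_kernel_def using tent_eq_0 by simp
qed

lemma has_real_derivative_smooth_step_scaled:
  assumes "\<delta> \<noteq> 0"
  shows "((\<lambda>s. smooth_step ((s - a) / \<delta>)) has_real_derivative tent_kernel a \<delta> s) (at s)"
proof -
  have "((\<lambda>s. (s - a) / \<delta>) has_real_derivative 1 / \<delta>) (at s)"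
    using assms by (auto intro!: derivative_eq_intros)
  from DERIV_chain2[OF has_real_derivative_smooth_step this] show ?thesis
    by (simp add: tent_kernel_def)
qed

lemma integrable_tent_kernel_mult:
  assumes "\<delta> > 0" "continuous_on UNIV V"
  shows "integrable lborel (\<lambda>s. tent_kernel a \<delta> s * V s)"
  using assms
  by (intro integrable_continuous_vanishing_outside[of a "a + 2 * \<delta>"])
     (auto intro!: continuous_intros continuous_on_subset[OF assms(2)] simp: tent_kernel_eq_0)

lemma
  assumes "\<delta> > 0"
  shows integrable_tent_kernel: "integrable lborel (tent_kernel a \<delta>)"
    and integral_tent_kernel: "(\<integral>s. tent_kernel a \<delta> s \<partial>lborel) = 1"
proof -
  have cont: "continuous_on {a..a + 2 * \<delta>} (tent_kernel a \<delta>)"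
    by (intro continuous_intros)
  show "integrable lborel (tent_kernel a \<delta>)"
    by (rule integrable_continuous_vanishing_outside[OF cont tent_kernel_eq_0[OF assms]])
  have "(tent_kernel a \<delta> has_integral
      smooth_step ((a + 2 * \<delta> - a) / \<delta>) - smooth_step ((a - a) / \<delta>)) {a..a + 2 * \<delta>}"
  proof (rule fundamental_theorem_of_calculus)
    show "((\<lambda>s. smooth_step ((s - a) / \<delta>)) has_vector_derivative tent_kernel a \<delta> s)
        (at s within {a..a + 2 * \<delta>})" for s
      using has_real_derivative_smooth_step_scaled[of \<delta> a s] assms
      by (simp add: has_real_derivative_iff_has_vector_derivative has_vector_derivative_at_within)
  qed (use assms in simp)
  then have "integral {a..a + 2 * \<delta>} (tent_kernel a \<delta>) = 1"
    using assms by (simp add: integral_unique smooth_step_eq_0 smooth_step_eq_1)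
  moreover have "(\<integral>s. tent_kernel a \<delta> s \<partial>lborel) = integral {a..a + 2 * \<delta>} (tent_kernel a \<delta>)"
    by (rule lborel_integral_eq_Icc_integral[OF cont]) (rule tent_kernel_eq_0[OF assms])
  ultimately show "(\<integral>s. tent_kernel a \<delta> s \<partial>lborel) = 1" by simp
qed

lemma tent_kernel_average_approx:
  assumes "\<delta> > 0" "continuous_on UNIV V" and close: "\<And>s. s \<in> {a..a + 2 * \<delta>} \<Longrightarrow> \<bar>V s - z\<bar> \<le> \<epsilon>"
  shows "\<bar>(\<integral>s. tent_kernel a \<delta> s * V s \<partial>lborel) - z\<bar> \<le> \<epsilon>"
proof -
  have "\<bar>(\<integral>s. tent_kernel a \<delta> s * V s \<partial>lborel) - z * (\<integral>s. tent_kernel a \<delta> s \<partial>lborel)\<bar>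
      \<le> \<epsilon> * (\<integral>s. tent_kernel a \<delta> s \<partial>lborel)"
  proof (rule integral_weight_approx)
    show "integrable lborel (tent_kernel a \<delta>)" by (rule integrable_tent_kernel[OF \<open>\<delta> > 0\<close>])
    show "integrable lborel (\<lambda>s. tent_kernel a \<delta> s * V s)"
      by (rule integrable_tent_kernel_mult[OF assms(1,2)])
    show "tent_kernel a \<delta> s \<ge> 0" for s using \<open>\<delta> > 0\<close> by (simp add: tent_kernel_nonneg)
    show "\<bar>V s - z\<bar> \<le> \<epsilon>" if "tent_kernel a \<delta> s \<noteq> 0" for s
      using close tent_kernel_eq_0[OF \<open>\<delta> > 0\<close>] that by blast
  qed
  then show ?thesis using integral_tent_kernel[OF \<open>\<delta> > 0\<close>] by simp
qed

lemma tendsto_tent_kernel_average: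
  assumes "continuous_on UNIV V"
  shows "((\<lambda>\<delta>. \<integral>s. tent_kernel a \<delta> s * V s \<partial>lborel) \<longlongrightarrow> V a) (at_right 0)"
proof (rule tendstoI)
  fix \<epsilon> :: real
  assume "\<epsilon> > 0"
  then obtain d where "d > 0" and d: "\<And>s. dist s a < d \<Longrightarrow> dist (V s) (V a) < \<epsilon> / 2"
    using assms half_gt_zero unfolding continuous_on_iff by (metis UNIV_I)
  have "dist (\<integral>s. tent_kernel a \<delta> s * V s \<partial>lborel) (V a) < \<epsilon>" if "\<delta> \<in> {0<..<d / 4}" for \<delta>
  proof -
    have "\<bar>(\<integral>s. tent_kernel a \<delta> s * V s \<partial>lborel) - V a\<bar> \<le> \<epsilon> / 2"
    proof (rule tent_kernel_average_approx[OF _ assms])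
      fix s assume "s \<in> {a..a + 2 * \<delta>}"
      then have "dist s a < d" using that by (auto simp: dist_real_def)
      then show "\<bar>V s - V a\<bar> \<le> \<epsilon> / 2"
        using d[of s] \<open>dist s a < d\<close> unfolding dist_real_def by linarith
    qed (use that in auto)
    then show ?thesis using \<open>\<epsilon> > 0\<close> by (simp add: dist_real_def)
  qed
  then show "\<forall>\<^sub>F \<delta> in at_right 0. dist (\<integral>s. tent_kernel a \<delta> s * V s \<partial>lborel) (V a) < \<epsilon>"
    using eventually_mono[OF eventually_at_right_real[of 0 "d / 4"]] \<open>d > 0\<close> by auto
qed

definition window :: "real \<Rightarrow> real \<Rightarrow> real \<Rightarrow> real \<Rightarrow> real" where
  "window a b \<delta> s = smooth_step ((s - a) / \<delta>) - smooth_step ((s - b) / \<delta>)"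

lemma continuous_on_window [continuous_intros]: "continuous_on A (window a b \<delta>)"
  unfolding window_def[abs_def] divide_inverse by (intro continuous_intros)

lemma has_real_derivative_window:
  "\<delta> \<noteq> 0 \<Longrightarrow> (window a b \<delta> has_real_derivative tent_kernel a \<delta> s - tent_kernel b \<delta> s) (at s)"
  unfolding window_def[abs_def] by (intro DERIV_diff has_real_derivative_smooth_step_scaled)

lemma window_eq_0:
  assumes "\<delta> > 0" "a \<le> b" "s \<notin> {a..b + 2 * \<delta>}"
  shows "window a b \<delta> s = 0"
proof (cases "s < a")
  case True
  then have "(s - a) / \<delta> \<le> 0" "(s - b) / \<delta> \<le> 0"
    using assms by (auto simp: divide_le_0_iff)
  then show ?thesis by (simp add: window_def smooth_step_eq_0)
next
  case False
  then have "2 \<le> (s - a) / \<delta>" "2 \<le> (s - b) / \<delta>"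
    using assms by (auto simp: le_divide_eq)
  then show ?thesis by (simp add: window_def smooth_step_eq_1)
qed

lemma window_bounds:
  assumes "\<delta> > 0" "a \<le> b"
  shows "0 \<le> window a b \<delta> s" "window a b \<delta> s \<le> 1"
proof -
  have "(s - b) / \<delta> \<le> (s - a) / \<delta>" using assms by (simp add: divide_right_mono)
  then show "0 \<le> window a b \<delta> s"
    using monoD[OF mono_smooth_step] by (simp add: window_def)
  show "window a b \<delta> s \<le> 1"
    using smooth_step_le_1[of "(s - a) / \<delta>"] smooth_step_nonneg[of "(s - b) / \<delta>"]
    by (simp add: window_def)
qed

lemma window_ge_half:
  assumes "\<delta> > 0" "a + 2 * \<delta> \<le> b" "s \<in> {a + \<delta>..b + \<delta>}"
  shows "1 / 2 \<le> window a b \<delta> s"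
proof (cases "s \<le> b")
  case True
  have "1 \<le> (s - a) / \<delta>" using assms by (simp add: le_divide_eq)
  then have "1 / 2 \<le> smooth_step ((s - a) / \<delta>)"
    using monoD[OF mono_smooth_step] smooth_step_1 by metis
  moreover have "smooth_step ((s - b) / \<delta>) = 0"
    using True assms by (simp add: divide_le_0_iff smooth_step_eq_0)
  ultimately show ?thesis by (simp add: window_def)
next
  case False
  have "2 \<le> (s - a) / \<delta>" using False assms by (simp add: le_divide_eq)
  moreover have "(s - b) / \<delta> \<le> 1" using assms by (simp add: divide_le_eq)
  then have "smooth_step ((s - b) / \<delta>) \<le> 1 / 2"
    using monoD[OF mono_smooth_step] smooth_step_1 by metis
  ultimately show ?thesis by (simp add: window_def smooth_step_eq_1)
qed

lemma
  assumes "\<delta> > 0" "a \<le> b"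
  shows integrable_window: "integrable lborel (window a b \<delta>)"
    and integrable_window_square: "integrable lborel (\<lambda>s. (window a b \<delta> s)\<^sup>2)"
  using window_eq_0[OF assms]
  by (auto intro!: integrable_continuous_vanishing_outside[of a "b + 2 * \<delta>"] continuous_intros)

lemma integral_window_ge:
  assumes "\<delta> > 0" "a + 2 * \<delta> \<le> b"
  shows "(b - a) / 2 \<le> (\<integral>s. window a b \<delta> s \<partial>lborel)"
proof -
  have "a \<le> b" using assms by simp
  have "(\<integral>s. 1 / 2 * indicator {a + \<delta>..b + \<delta>} s \<partial>lborel) \<le> (\<integral>s. window a b \<delta> s \<partial>lborel)"
  proof (rule integral_mono)
    show "integrable lborel (\<lambda>s. 1 / 2 * indicator {a + \<delta>..b + \<delta>} s :: real)"
      by (intro integrable_mult_right integrable_real_indicator) (auto simp: emeasure_lborel_Icc_eq)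
    show "1 / 2 * indicator {a + \<delta>..b + \<delta>} s \<le> window a b \<delta> s" for s
      using window_ge_half[OF assms, of s] window_bounds[OF \<open>\<delta> > 0\<close> \<open>a \<le> b\<close>, of s]
      by (auto simp: indicator_def)
  qed (rule integrable_window[OF \<open>\<delta> > 0\<close> \<open>a \<le> b\<close>])
  then show ?thesis using \<open>a \<le> b\<close> by simp
qed

lemma integral_window_square_le:
  assumes "\<delta> > 0" "a \<le> b"
  shows "(\<integral>s. (window a b \<delta> s)\<^sup>2 \<partial>lborel) \<le> b - a + 2 * \<delta>"
proof -
  have "(\<integral>s. (window a b \<delta> s)\<^sup>2 \<partial>lborel) \<le> (\<integral>s. indicator {a..b + 2 * \<delta>} s \<partial>lborel)"
  proof (rule integral_mono)
    show "integrable lborel (\<lambda>s. indicator {a..b + 2 * \<delta>} s :: real)"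
      by (intro integrable_real_indicator) (auto simp: emeasure_lborel_Icc_eq)
    show "(window a b \<delta> s)\<^sup>2 \<le> indicator {a..b + 2 * \<delta>} s" for s
      using window_bounds[OF assms, of s] window_eq_0[OF assms, of s]
      by (cases "s \<in> {a..b + 2 * \<delta>}") (auto simp: power_le_one)
  qed (rule integrable_window_square[OF assms])
  then show ?thesis using assms by simp
qed

section \<open>Weak derivatives in time\<close>

definition test_fun_line :: "(real \<Rightarrow> real) \<Rightarrow> (real \<Rightarrow> real) \<Rightarrow> bool" where
  "test_fun_line \<alpha> \<alpha>' \<longleftrightarrow>
     (\<forall>s. (\<alpha> has_real_derivative \<alpha>' s) (at s)) \<and> continuous_on UNIV \<alpha>' \<and>
     (\<exists>K. \<forall>s. K < \<bar>s\<bar> \<longrightarrow> \<alpha> s = 0)"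

definition has_weak_derivative :: "(real \<Rightarrow> real) \<Rightarrow> (real \<Rightarrow> real) \<Rightarrow> bool" where
  "has_weak_derivative U W \<longleftrightarrow>
     (\<forall>\<alpha> \<alpha>'. test_fun_line \<alpha> \<alpha>' \<longrightarrow> (\<integral>s. \<alpha>' s * U s + \<alpha> s * W s \<partial>lborel) = 0)"

lemma test_fun_line_window:
  assumes "\<delta> > 0" "a \<le> b"
  shows "test_fun_line (window a b \<delta>) (\<lambda>s. tent_kernel a \<delta> s - tent_kernel b \<delta> s)"
  unfolding test_fun_line_def
proof (intro conjI allI)
  show "(window a b \<delta> has_real_derivative tent_kernel a \<delta> s - tent_kernel b \<delta> s) (at s)" for s
    using assms by (simp add: has_real_derivative_window)
  show "continuous_on UNIV (\<lambda>s. tent_kernel a \<delta> s - tent_kernel b \<delta> s)"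
    by (intro continuous_intros)
  show "\<exists>K. \<forall>s. K < \<bar>s\<bar> \<longrightarrow> window a b \<delta> s = 0"
  proof (intro exI[of _ "\<bar>a\<bar> + \<bar>b + 2 * \<delta>\<bar>"] allI impI)
    fix s :: real
    assume "\<bar>a\<bar> + \<bar>b + 2 * \<delta>\<bar> < \<bar>s\<bar>"
    then have "s \<notin> {a..b + 2 * \<delta>}" by auto
    then show "window a b \<delta> s = 0" by (rule window_eq_0[OF assms])
  qed
qed

lemma has_weak_derivative_tent_average_diff:
  assumes weak: "has_weak_derivative U W" and U: "continuous_on UNIV U"
    and W: "W \<in> borel_measurable borel" "\<And>t. \<bar>W t\<bar> \<le> M" and "\<delta> > 0" "a \<le> b"
  shows "\<bar>(\<integral>s. tent_kernel b \<delta> s * U s \<partial>lborel) - (\<integral>s. tent_kernel a \<delta> s * U s \<partial>lborel)\<bar>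
    \<le> M * (b - a + 2 * \<delta>)"
proof -
  let ?I = "{a..b + 2 * \<delta>}"
  have window_W: "\<bar>window a b \<delta> s * W s\<bar> \<le> M * indicator ?I s" for s
  proof (cases "s \<in> ?I")
    case True
    have "\<bar>window a b \<delta> s\<bar> * \<bar>W s\<bar> \<le> 1 * M"
      using window_bounds[OF \<open>\<delta> > 0\<close> \<open>a \<le> b\<close>, of s] W(2)[of s] by (intro mult_mono) auto
    then show ?thesis using True by (simp add: abs_mult)
  next
    case False
    then show ?thesis using window_eq_0[OF \<open>\<delta> > 0\<close> \<open>a \<le> b\<close>] by simp
  qed
  have M_int: "integrable lborel (\<lambda>s. M * indicator ?I s)"
    by (intro integrable_mult_right integrable_real_indicator) (auto simp: emeasure_lborel_Icc_eq)
  have int_W: "integrable lborel (\<lambda>s. window a b \<delta> s * W s)"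
  proof (rule Bochner_Integration.integrable_bound[OF M_int])
    show "(\<lambda>s. window a b \<delta> s * W s) \<in> borel_measurable lborel"
      using W(1) borel_measurable_continuous_onI[OF continuous_on_window] by simp
    show "AE s in lborel. norm (window a b \<delta> s * W s) \<le> norm (M * indicator ?I s)"
      using window_W by (auto intro: order_trans[OF _ abs_ge_self])
  qed
  have "(\<integral>s. (tent_kernel a \<delta> s - tent_kernel b \<delta> s) * U s + window a b \<delta> s * W s \<partial>lborel) = 0"
    using weak test_fun_line_window[OF \<open>\<delta> > 0\<close> \<open>a \<le> b\<close>] unfolding has_weak_derivative_def by blast
  then have "(\<integral>s. tent_kernel b \<delta> s * U s \<partial>lborel) - (\<integral>s. tent_kernel a \<delta> s * U s \<partial>lborel)
      = (\<integral>s. window a b \<delta> s * W s \<partial>lborel)"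
    using integrable_tent_kernel_mult[OF \<open>\<delta> > 0\<close> U] int_W by (simp add: left_diff_distrib)
  also have "\<bar>\<dots>\<bar> \<le> (\<integral>s. M * indicator ?I s \<partial>lborel)"
    by (rule integral_abs_bound_integral[OF int_W M_int window_W])
  also have "\<dots> = M * (b - a + 2 * \<delta>)"
    using \<open>\<delta> > 0\<close> \<open>a \<le> b\<close> by simp
  finally show ?thesis .
qed

lemma has_weak_derivative_lipschitz:
  assumes "has_weak_derivative U W" "continuous_on UNIV U"
    and "W \<in> borel_measurable borel" "\<And>t. \<bar>W t\<bar> \<le> M" and "a \<le> b"
  shows "\<bar>U b - U a\<bar> \<le> M * (b - a)"
proof (rule tendsto_le[OF trivial_limit_at_right_real])
  let ?avg = "\<lambda>x \<delta>. \<integral>s. tent_kernel x \<delta> s * U s \<partial>lborel"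
  show "((\<lambda>\<delta>. \<bar>?avg b \<delta> - ?avg a \<delta>\<bar>) \<longlongrightarrow> \<bar>U b - U a\<bar>) (at_right 0)"
    by (intro tendsto_intros tendsto_tent_kernel_average \<open>continuous_on UNIV U\<close>)
  show "((\<lambda>\<delta>. M * (b - a + 2 * \<delta>)) \<longlongrightarrow> M * (b - a)) (at_right 0)"
    by (auto intro!: tendsto_eq_intros)
  show "\<forall>\<^sub>F \<delta> in at_right 0. \<bar>?avg b \<delta> - ?avg a \<delta>\<bar> \<le> M * (b - a + 2 * \<delta>)"
    by (rule eventually_mono[OF eventually_at_right_less])
       (rule has_weak_derivative_tent_average_diff[OF assms(1-4) _ assms(5)])
qed

lemma continuous_on_tensor:
  fixes f g :: "real \<Rightarrow> real"
  assumes "continuous_on UNIV f" "continuous_on UNIV g"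
  shows "continuous_on UNIV (\<lambda>(t, x). f t * g x)"
proof -
  have "continuous_on UNIV (\<lambda>p::real \<times> real. f (fst p))" "continuous_on UNIV (\<lambda>p::real \<times> real. g (snd p))"
    by (rule continuous_on_compose2[OF assms(1)] continuous_on_compose2[OF assms(2)];
        auto intro: continuous_intros)+
  then show ?thesis unfolding case_prod_beta by (rule continuous_on_mult)
qed

lemma test_fun_tensor:
  assumes \<alpha>: "test_fun_line \<alpha> \<alpha>'" and \<beta>: "test_fun_line \<beta> \<beta>'"
  shows "test_fun (\<lambda>t x. \<alpha> t * \<beta> x) (\<lambda>t x. \<alpha>' t * \<beta> x) (\<lambda>t x. \<alpha> t * \<beta>' x)"
proof -
  have deriv: "\<And>s. (\<alpha> has_real_derivative \<alpha>' s) (at s)" "\<And>s. (\<beta> has_real_derivative \<beta>' s) (at s)"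
    and cont': "continuous_on UNIV \<alpha>'" "continuous_on UNIV \<beta>'"
    using \<alpha> \<beta> unfolding test_fun_line_def by auto
  obtain K L where K: "\<And>s. K < \<bar>s\<bar> \<Longrightarrow> \<alpha> s = 0" and L: "\<And>s. L < \<bar>s\<bar> \<Longrightarrow> \<beta> s = 0"
    using \<alpha> \<beta> unfolding test_fun_line_def by metis
  have cont: "continuous_on UNIV \<alpha>" "continuous_on UNIV \<beta>"
    using deriv by (auto intro!: continuous_at_imp_continuous_on DERIV_isCont)
  show ?thesis
    unfolding test_fun_def
  proof (intro conjI allI)
    show "continuous_on UNIV (\<lambda>(t, x). \<alpha>' t * \<beta> x)" "continuous_on UNIV (\<lambda>(t, x). \<alpha> t * \<beta>' x)"
      using cont cont' by (simp_all add: continuous_on_tensor)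
    show "((\<lambda>s. \<alpha> s * \<beta> x) has_real_derivative \<alpha>' t * \<beta> x) (at t)"
      "((\<lambda>y. \<alpha> t * \<beta> y) has_real_derivative \<alpha> t * \<beta>' x) (at x)" for t x
      using deriv by (auto intro: DERIV_cmult_right DERIV_cmult)
    show "\<exists>M. \<forall>t x. M < \<bar>t\<bar> \<or> M < \<bar>x\<bar> \<longrightarrow> \<alpha> t * \<beta> x = 0"
      using K L by (intro exI[of _ "max K L"]) auto
  qed
qed

lemma has_weak_derivative_spatial_average:
  fixes u w :: "real \<Rightarrow> real \<Rightarrow> real"
  assumes weak: "\<And>\<phi> \<phi>t \<phi>x. test_fun \<phi> \<phi>t \<phi>x \<Longrightarrow> dint (\<lambda>t x. u t x * \<phi>t t x + w t x * \<phi> t x) = 0"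
    and \<beta>: "test_fun_line \<beta> \<beta>'"
    and int_u: "\<And>t. integrable lborel (\<lambda>y. \<beta> y * u t y)"
    and int_w: "\<And>t. integrable lborel (\<lambda>y. \<beta> y * w t y)"
  shows "has_weak_derivative (\<lambda>t. \<integral>y. \<beta> y * u t y \<partial>lborel) (\<lambda>t. \<integral>y. \<beta> y * w t y \<partial>lborel)"
  unfolding has_weak_derivative_def
proof (intro allI impI)
  fix \<alpha> \<alpha>' assume \<alpha>: "test_fun_line \<alpha> \<alpha>'"
  have "(\<integral>x. u t x * (\<alpha>' t * \<beta> x) + w t x * (\<alpha> t * \<beta> x) \<partial>lborel)
      = \<alpha>' t * (\<integral>y. \<beta> y * u t y \<partial>lborel) + \<alpha> t * (\<integral>y. \<beta> y * w t y \<partial>lborel)" for t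
    using int_u[of t] int_w[of t] by (simp add: algebra_simps)
  then show "(\<integral>t. \<alpha>' t * (\<integral>y. \<beta> y * u t y \<partial>lborel) + \<alpha> t * (\<integral>y. \<beta> y * w t y \<partial>lborel) \<partial>lborel) = 0"
    using weak[OF test_fun_tensor[OF \<alpha> \<beta>]] unfolding dint_def by simp
qed

lemma continuous_on_slice:
  assumes "continuous_on UNIV (\<lambda>(t, x). u t x)"
  shows "continuous_on A (u t)"
proof -
  have "continuous_on UNIV (\<lambda>x. (\<lambda>(t, x). u t x) (t, x))"
    by (rule continuous_on_compose2[OF assms]) (auto intro: continuous_intros)
  then show ?thesis using continuous_on_subset by force
qed

lemma continuous_on_spatial_average:
  fixes u :: "real \<Rightarrow> real \<Rightarrow> real"
  assumes u: "continuous_on UNIV (\<lambda>(t, x). u t x)" and \<beta>: "continuous_on UNIV \<beta>"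
    and vanish: "\<And>y. y \<notin> {p..q} \<Longrightarrow> \<beta> y = 0"
  shows "continuous_on UNIV (\<lambda>t. \<integral>y. \<beta> y * u t y \<partial>lborel)"
proof -
  have "continuous_on UNIV (\<lambda>p::real \<times> real. \<beta> (snd p))"
    by (rule continuous_on_compose2[OF \<beta>]) (auto intro: continuous_intros)
  then have joint: "continuous_on UNIV (\<lambda>(t, y). \<beta> y * u t y)"
    using u unfolding case_prod_beta by (rule continuous_on_mult)
  have "(\<integral>y. \<beta> y * u t y \<partial>lborel) = integral {p..q} (\<lambda>y. \<beta> y * u t y)" for t
    using vanish
    by (intro lborel_integral_eq_Icc_integral continuous_on_mult continuous_on_subset[OF \<beta>]
        continuous_on_slice[OF u]) auto
  then show ?thesis
    using integral_continuous_on_param[OF continuous_on_subset[OF joint], of UNIV p q]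
    by (simp add: cbox_interval)
qed

lemma borel_measurable_spatial_average:
  fixes w :: "real \<Rightarrow> real \<Rightarrow> real"
  assumes w: "(\<lambda>(t, x). w t x) \<in> borel_measurable borel" and \<beta>: "\<beta> \<in> borel_measurable borel"
  shows "(\<lambda>t. \<integral>y. \<beta> y * w t y \<partial>lborel) \<in> borel_measurable borel"
proof -
  have "sets (borel \<Otimes>\<^sub>M lborel) = sets (borel :: (real \<times> real) measure)"
    by (metis borel_prod sets_lborel sets_pair_measure_cong)
  from measurable_cong_sets[OF this refl] w
  have [measurable]: "(\<lambda>(t, x). w t x) \<in> borel_measurable (borel \<Otimes>\<^sub>M lborel)"
    by blast
  have [measurable]: "\<beta> \<in> borel_measurable borel" by (rule \<beta>)
  have "(\<lambda>(t, y). \<beta> y * w t y) \<in> borel_measurable (borel \<Otimes>\<^sub>M lborel)"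
    by measurable
  then show ?thesis by (rule lborel.borel_measurable_lebesgue_integral)
qed

section \<open>Holder continuity in time\<close>

lemma admissible_window_average:
  fixes x h :: real
  assumes adm: "admissible c u R S \<mu> \<nu>" and "h > 0"
  defines "\<beta> \<equiv> window (x - 2 * h) x h"
  shows "integrable lborel (\<lambda>y. \<beta> y * ((R y + S y) / 2))"
    and "\<bar>\<integral>y. \<beta> y * ((R y + S y) / 2) \<partial>lborel\<bar>
      \<le> sqrt h * (measure \<mu> UNIV + measure \<nu> UNIV + 2)"
proof -
  define E where "E = measure \<mu> UNIV + measure \<nu> UNIV"
  have "x - 2 * h \<le> x" using \<open>h > 0\<close> by simp
  have \<beta>_meas: "\<beta> \<in> borel_measurable borel"
    unfolding \<beta>_def by (intro borel_measurable_continuous_onI continuous_on_window)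
  have w_meas: "(\<lambda>y. (R y + S y) / 2) \<in> borel_measurable borel"
    using adm unfolding admissible_def L2_def by (auto intro: borel_measurable_add borel_measurable_divide)
  have "1 / sqrt h > 0" using \<open>h > 0\<close> by simp
  note product = square_integrable_product[OF \<beta>_meas w_meas
      integrable_window_square[OF \<open>h > 0\<close> \<open>x - 2 * h \<le> x\<close>, folded \<beta>_def]
      admissible_half_sum_square(1)[OF adm] \<open>1 / sqrt h > 0\<close>]
  show "integrable lborel (\<lambda>y. \<beta> y * ((R y + S y) / 2))" by (rule product(1))
  have "2 * \<bar>\<integral>y. \<beta> y * ((R y + S y) / 2) \<partial>lborel\<bar>
      \<le> 1 / sqrt h * (\<integral>y. (\<beta> y)\<^sup>2 \<partial>lborel) + (\<integral>y. ((R y + S y) / 2)\<^sup>2 \<partial>lborel) / (1 / sqrt h)"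
    by (rule product(2))
  also have "\<dots> \<le> 1 / sqrt h * (4 * h) + 2 * E / (1 / sqrt h)"
    using integral_window_square_le[OF \<open>h > 0\<close> \<open>x - 2 * h \<le> x\<close>, folded \<beta>_def]
      admissible_half_sum_square(2)[OF adm] \<open>1 / sqrt h > 0\<close>
    unfolding E_def by (intro add_mono mult_left_mono divide_right_mono) auto
  also have "\<dots> = 2 * (sqrt h * (E + 2))"
    using \<open>h > 0\<close> real_div_sqrt[of h] by (simp add: field_simps)
  finally show "\<bar>\<integral>y. \<beta> y * ((R y + S y) / 2) \<partial>lborel\<bar>
      \<le> sqrt h * (measure \<mu> UNIV + measure \<nu> UNIV + 2)" by (simp add: E_def)
qed

lemma integrable_window_mult:
  assumes "\<delta> > 0" "a \<le> b" "continuous_on UNIV f"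
  shows "integrable lborel (\<lambda>y. window a b \<delta> y * f y)"
  using window_eq_0[OF assms(1,2)]
  by (intro integrable_continuous_vanishing_outside[of a "b + 2 * \<delta>"] continuous_on_mult
      continuous_on_window continuous_on_subset[OF assms(3)]) auto

lemma conservative_solution_window_average_lipschitz:
  fixes x h :: real
  assumes sol: "conservative_solution c c' u R S \<mu> \<nu> u0 R0 S0 \<mu>0 \<nu>0" and "h > 0" and "a \<le> b"
  defines "\<beta> \<equiv> window (x - 2 * h) x h"
  shows "\<bar>(\<integral>y. \<beta> y * u b y \<partial>lborel) - (\<integral>y. \<beta> y * u a y \<partial>lborel)\<bar>
    \<le> sqrt h * (measure \<mu>0 UNIV + measure \<nu>0 UNIV + 2) * (b - a)"
proof (rule has_weak_derivative_lipschitz[OF _ _ _ _ \<open>a \<le> b\<close>])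
  define w where "w t y = (R t y + S t y) / 2" for t y
  have "x - 2 * h \<le> x" using \<open>h > 0\<close> by simp
  have adm: "\<And>t. admissible c (u t) (R t) (S t) (\<mu> t) (\<nu> t)"
    and energy: "\<And>t. measure (\<mu> t) UNIV + measure (\<nu> t) UNIV = measure \<mu>0 UNIV + measure \<nu>0 UNIV"
    and u_cont: "continuous_on UNIV (\<lambda>(t, x). u t x)"
    and RS_meas: "(\<lambda>(t, x). R t x) \<in> borel_measurable borel" "(\<lambda>(t, x). S t x) \<in> borel_measurable borel"
    and weak: "\<And>\<phi> \<phi>t \<phi>x. test_fun \<phi> \<phi>t \<phi>x \<Longrightarrow> dint (\<lambda>t x. u t x * \<phi>t t x + w t x * \<phi> t x) = 0"
    using sol unfolding conservative_solution_def w_def by blast+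
  have \<beta>_cont: "continuous_on UNIV \<beta>"
    unfolding \<beta>_def by (rule continuous_on_window)
  have u_int: "integrable lborel (\<lambda>y. \<beta> y * u t y)" for t
    unfolding \<beta>_def
    by (rule integrable_window_mult[OF \<open>h > 0\<close> \<open>x - 2 * h \<le> x\<close> continuous_on_slice[OF u_cont]])
  have w_int: "integrable lborel (\<lambda>y. \<beta> y * w t y)"
    and W_bound: "\<bar>\<integral>y. \<beta> y * w t y \<partial>lborel\<bar> \<le> sqrt h * (measure \<mu>0 UNIV + measure \<nu>0 UNIV + 2)" for t
    using admissible_window_average[OF adm[of t] \<open>h > 0\<close>, where x = x] energy[of t]
    by (simp_all add: w_def \<beta>_def)
  show "\<bar>\<integral>y. \<beta> y * w t y \<partial>lborel\<bar> \<le> sqrt h * (measure \<mu>0 UNIV + measure \<nu>0 UNIV + 2)" for t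
    by (rule W_bound)
  show "has_weak_derivative (\<lambda>t. \<integral>y. \<beta> y * u t y \<partial>lborel) (\<lambda>t. \<integral>y. \<beta> y * w t y \<partial>lborel)"
    using weak test_fun_line_window[OF \<open>h > 0\<close> \<open>x - 2 * h \<le> x\<close>, folded \<beta>_def] u_int w_int
    by (rule has_weak_derivative_spatial_average)
  show "continuous_on UNIV (\<lambda>t. \<integral>y. \<beta> y * u t y \<partial>lborel)"
    using u_cont \<beta>_cont window_eq_0[OF \<open>h > 0\<close> \<open>x - 2 * h \<le> x\<close>, folded \<beta>_def]
    by (rule continuous_on_spatial_average)
  have "(\<lambda>(t, x). w t x) \<in> borel_measurable borel"
    using RS_meas unfolding w_def case_prod_beta by measurable
  then show "(\<lambda>t. \<integral>y. \<beta> y * w t y \<partial>lborel) \<in> borel_measurable borel"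
    by (rule borel_measurable_spatial_average[OF _ borel_measurable_continuous_onI[OF \<beta>_cont]])
qed

lemma conservative_solution_holder_time:
  assumes sol: "conservative_solution c c' u R S \<mu> \<nu> u0 R0 S0 \<mu>0 \<nu>0"
    and space: "\<And>t y z. \<bar>u t y - u t z\<bar> \<le> K * sqrt \<bar>y - z\<bar>" and "K \<ge> 0" and "a < b"
  shows "\<bar>u b x - u a x\<bar> \<le> (3 * K + measure \<mu>0 UNIV + measure \<nu>0 UNIV + 2) * sqrt (b - a)"
proof -
  define E where "E = measure \<mu>0 UNIV + measure \<nu>0 UNIV"
  define h where "h = b - a"
  define \<beta> where "\<beta> = window (x - 2 * h) x h"
  define U where "U t = (\<integral>y. \<beta> y * u t y \<partial>lborel)" for t
  define B where "B = (\<integral>y. \<beta> y \<partial>lborel)"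
  have "h > 0" "x - 2 * h \<le> x" using \<open>a < b\<close> by (simp_all add: h_def)
  have "h \<le> B"
    using integral_window_ge[of h "x - 2 * h" x] \<open>h > 0\<close> by (simp add: B_def \<beta>_def)
  have "\<bar>U b - U a\<bar> \<le> sqrt h * (E + 2) * h"
    using conservative_solution_window_average_lipschitz[OF sol \<open>h > 0\<close>, of a b x] \<open>a < b\<close>
    by (simp add: U_def E_def \<beta>_def h_def add.assoc)
  also have "\<dots> \<le> sqrt h * (E + 2) * B"
    using \<open>h \<le> B\<close> \<open>h > 0\<close> by (intro mult_left_mono) (auto simp: E_def)
  finally have U_lipschitz: "\<bar>U b - U a\<bar> \<le> sqrt h * (E + 2) * B" .
  have U_close: "\<bar>U t - u t x * B\<bar> \<le> K * sqrt (2 * h) * B" for t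
    unfolding U_def B_def
  proof (rule integral_weight_approx)
    show "integrable lborel \<beta>"
      unfolding \<beta>_def by (rule integrable_window[OF \<open>h > 0\<close> \<open>x - 2 * h \<le> x\<close>])
    have "continuous_on UNIV (\<lambda>(t, x). u t x)"
      using sol unfolding conservative_solution_def by blast
    then show "integrable lborel (\<lambda>y. \<beta> y * u t y)"
      unfolding \<beta>_def by (rule integrable_window_mult[OF \<open>h > 0\<close> \<open>x - 2 * h \<le> x\<close> continuous_on_slice])
    show "\<beta> y \<ge> 0" for y
      unfolding \<beta>_def by (rule window_bounds[OF \<open>h > 0\<close> \<open>x - 2 * h \<le> x\<close>])
    show "\<bar>u t y - u t x\<bar> \<le> K * sqrt (2 * h)" if "\<beta> y \<noteq> 0" for y
    proof -
      have "y \<in> {x - 2 * h..x + 2 * h}"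
        using window_eq_0[OF \<open>h > 0\<close> \<open>x - 2 * h \<le> x\<close>, of y] that unfolding \<beta>_def by auto
      then have "\<bar>y - x\<bar> \<le> 2 * h" by auto
      then show ?thesis
        using space[of t y x] \<open>K \<ge> 0\<close> by (meson mult_left_mono order_trans real_sqrt_le_iff)
    qed
  qed
  have "\<bar>u b x - u a x\<bar> * B = \<bar>u b x * B - u a x * B\<bar>"
    using \<open>h \<le> B\<close> \<open>h > 0\<close> by (simp add: abs_mult_pos left_diff_distrib)
  also have "\<dots> \<le> K * sqrt (2 * h) * B + K * sqrt (2 * h) * B + sqrt h * (E + 2) * B"
    using U_close[of a] U_close[of b] U_lipschitz by arith
  also have "\<dots> = (2 * K * sqrt (2 * h) + sqrt h * (E + 2)) * B"
    by (simp add: algebra_simps)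
  finally have "\<bar>u b x - u a x\<bar> \<le> 2 * K * sqrt (2 * h) + sqrt h * (E + 2)"
    by (rule mult_right_le_imp_le) (use \<open>h \<le> B\<close> \<open>h > 0\<close> in simp)
  moreover have "2 * K * sqrt (2 * h) \<le> 3 * K * sqrt h"
  proof -
    have "2 * sqrt 2 \<le> (3 :: real)"
      using real_le_lsqrt[of "3 / 2" 2] by (simp add: power2_eq_square)
    then have "(2 * sqrt 2) * (K * sqrt h) \<le> 3 * (K * sqrt h)"
      using \<open>K \<ge> 0\<close> \<open>h > 0\<close> by (intro mult_right_mono) auto
    then show ?thesis by (simp add: real_sqrt_mult mult_ac)
  qed
  moreover have "3 * K * sqrt h + sqrt h * (E + 2)
      = (3 * K + measure \<mu>0 UNIV + measure \<nu>0 UNIV + 2) * sqrt (b - a)"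
    by (simp add: h_def E_def algebra_simps)
  ultimately show ?thesis by linarith
qed

lemma conservative_solution_holder:
  assumes sol: "conservative_solution c c' u R S \<mu> \<nu> u0 R0 S0 \<mu>0 \<nu>0"
    and "\<kappa> > 0" and c_lower: "\<And>x. 1 / \<kappa> \<le> c x"
  defines "E \<equiv> measure \<mu>0 UNIV + measure \<nu>0 UNIV"
  shows "\<bar>u t1 x1 - u t2 x2\<bar> \<le> (\<kappa> * (8 * E + 1) + E + 2) * sqrt (\<bar>t2 - t1\<bar> + \<bar>x2 - x1\<bar>)"
proof -
  define K where "K = \<kappa> * (8 * E + 1) / 4"
  have "K \<ge> 0" using \<open>\<kappa> > 0\<close> by (simp add: K_def E_def)
  have adm: "\<And>t. admissible c (u t) (R t) (S t) (\<mu> t) (\<nu> t)"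
    and energy: "\<And>t. measure (\<mu> t) UNIV + measure (\<nu> t) UNIV = E"
    using sol unfolding conservative_solution_def E_def by auto
  have space: "\<bar>u t y - u t z\<bar> \<le> K * sqrt \<bar>y - z\<bar>" for t y z
    using admissible_holder[OF adm c_lower \<open>\<kappa> > 0\<close>, of t y z] energy[of t] by (simp add: K_def)
  have time: "\<bar>u t x - u s x\<bar> \<le> (3 * K + E + 2) * sqrt \<bar>t - s\<bar>" for s t x
    using conservative_solution_holder_time[OF sol space \<open>K \<ge> 0\<close>, of s t x]
      conservative_solution_holder_time[OF sol space \<open>K \<ge> 0\<close>, of t s x]
    by (cases s t rule: linorder_cases) (auto simp: E_def abs_minus_commute add.assoc)
  have "\<bar>u t1 x1 - u t2 x2\<bar> \<le> \<bar>u t1 x1 - u t1 x2\<bar> + \<bar>u t2 x2 - u t1 x2\<bar>" by arith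
  also have "\<dots> \<le> K * sqrt \<bar>x1 - x2\<bar> + (3 * K + E + 2) * sqrt \<bar>t2 - t1\<bar>"
    using space time by (intro add_mono)
  also have "\<dots> \<le> (K + (3 * K + E + 2)) * sqrt (\<bar>t2 - t1\<bar> + \<bar>x2 - x1\<bar>)"
    using \<open>K \<ge> 0\<close> unfolding distrib_right
    by (intro add_mono mult_left_mono) (auto simp: E_def abs_minus_commute)
  also have "K + (3 * K + E + 2) = \<kappa> * (8 * E + 1) + E + 2"
    by (simp add: K_def)
  finally show ?thesis .
qed

(* Only the lower bound on c enters the estimate; the other hypotheses on c serve the
   existence theory of conservative solutions. *)
theorem lemma2p2:
  shows "\<exists>D :: real \<Rightarrow> real \<Rightarrow> real.
    \<forall>(\<kappa>::real) (lam::real) (lamb::real) (c::real \<Rightarrow> real) c' c''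
      u0 R0 S0 \<mu>0 \<nu>0 u R S \<mu> \<nu>.
      \<kappa> > 1 \<and> lam \<ge> 0 \<and> lamb \<ge> 0 \<and>
      (\<forall>x. (c has_real_derivative c' x) (at x)) \<and>
      (\<forall>x. (c' has_real_derivative c'' x) (at x)) \<and> continuous_on UNIV c'' \<and>
      (\<forall>x. 1 / \<kappa> \<le> c x \<and> c x \<le> \<kappa> \<and> \<bar>c' x\<bar> \<le> lam \<and> \<bar>c'' x\<bar> \<le> lamb) \<and>
      admissible c u0 R0 S0 \<mu>0 \<nu>0 \<and>
      conservative_solution c c' u R S \<mu> \<nu> u0 R0 S0 \<mu>0 \<nu>0
      \<longrightarrow> (\<forall>t1 x1 t2 x2.
             \<bar>u t1 x1 - u t2 x2\<bar>
               \<le> D \<kappa> (measure \<mu>0 UNIV + measure \<nu>0 UNIV) * sqrt (\<bar>t2 - t1\<bar> + \<bar>x2 - x1\<bar>))"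
  by (intro exI[of _ "\<lambda>\<kappa> E. \<kappa> * (8 * E + 1) + E + 2"] allI impI, elim conjE,
      rule conservative_solution_holder, assumption) (linarith, blast)

end
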